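(* In any finite ELP, for any policy $\pi$, $Q^*$ is an optimal solution of the problem: maximize $\mathbb E_\pi[Q(S_T,A_T)]$ over $Q\in\mathcal Q$ subject to $Q(s,a)\le\mathcal BQ(s,a)$ for all $(s,a)$. Equivalently, $Q^*\in\arg\max_{Q\in\mathcal Q}\min_{\lambda\ge0}\mathcal L_\pi(Q,\lambda)$.
   Context: A finite ELP is $(\mathcal S,\mathcal A,P,R,\rho)$ with finite $\mathcal S,\mathcal A$, reward $R:\mathcal S\to\mathbb R$, transitions $P(s'|s,a)$, distribution $\rho$, and nonempty terminal set $\mathcal S_\bot$. Under a policy $\pi$, $S_0$ is a fixed terminal state, $A_t\sim\pi(\cdot|S_t)$, $S_{t+1}\sim P(\cdot|S_t,A_t)$, and $T=\inf\{t\ge1:S_t\in\mathcal S_\bot\}$. ELP conditions: $\mathbb E_\pi[T]<\infty$ for every $\pi$; $P(s'|s,a)=\rho(s')$ for all $s\in\mathcal S_\bot$, all $a,s'$; every state is reachable under some policy. $\mathcal Q$ = all functions $\mathcal S\times\mathcal A\to\mathbb R$; $\lambda\ge0$ ranges over functions $\mathcal S\times\mathcal A\to[0,\infty)$. $\mathcal BQ(s,a)=\sum_{s'}P(s'|s,a)\big(R(s')+\mathbf 1[s'\notin\mathcal S_\bot]\max_{a'}Q(s',a')\big)$, with unique fixed point $Q^*$. $\mathcal L_\pi(Q,\lambda)=\mathbb E_\pi[Q(S_T,A_T)]+\sum_{s,a}\lambda(s,a)(\mathcal BQ(s,a)-Q(s,a))$ with $A_T\sim\pi(\cdot|S_T)$.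 *)

theory Defs
  imports "HOL-Analysis.Analysis"
begin

text \<open>A finite episodic learning problem (ELP). Transition kernel P s a s' = P(s'|s,a), reward R, distribution rho,
terminal set Sbot, fixed initial terminal state s0.\<close>

definition is_distr :: "('x::finite \<Rightarrow> real) \<Rightarrow> bool" where
  "is_distr p \<longleftrightarrow> (\<forall>x. 0 \<le> p x) \<and> (\<Sum>x\<in>UNIV. p x) = 1"

definition is_kernel :: "('s::finite \<Rightarrow> 'a::finite \<Rightarrow> 's \<Rightarrow> real) \<Rightarrow> bool" where
  "is_kernel P \<longleftrightarrow> (\<forall>s a. is_distr (P s a))"

text \<open>Stationary Markov (stochastic) policy: \<pi> s a = \<pi>(a|s).\<close>
definition is_policy :: "('s::finite \<Rightarrow> 'a::finite \<Rightarrow> real) \<Rightarrow> bool" where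
  "is_policy \<pi> \<longleftrightarrow> (\<forall>s. is_distr (\<pi> s))"

text \<open>occ P Sbot s0 \<pi> t s = Pr_pi(S_(t+1) = s and T \<ge> t+1), i.e. the probability of
being in state s at time t+1 without having hit a terminal state at times 1..t.\<close>
fun occ :: "('s::finite \<Rightarrow> 'a::finite \<Rightarrow> 's \<Rightarrow> real) \<Rightarrow> 's set \<Rightarrow> 's \<Rightarrow>
    ('s \<Rightarrow> 'a \<Rightarrow> real) \<Rightarrow> nat \<Rightarrow> 's \<Rightarrow> real" where
  "occ P Sbot s0 \<pi> 0 s' = (\<Sum>a\<in>UNIV. \<pi> s0 a * P s0 a s')"
| "occ P Sbot s0 \<pi> (Suc t) s' =
     (\<Sum>s\<in>-Sbot. \<Sum>a\<in>UNIV. occ P Sbot s0 \<pi> t s * \<pi> s a * P s a s')"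

text \<open>E_pi[T] = sum_(t \<ge> 1) Pr(T \<ge> t) = sum_(t\<ge>0) sum_s occ t s.\<close>
definition finite_expected_T where
  "finite_expected_T P Sbot s0 \<pi> \<longleftrightarrow> summable (\<lambda>t. \<Sum>s\<in>UNIV. occ P Sbot s0 \<pi> t s)"

text \<open>Pr_pi(S_T = s) for terminal s.\<close>
definition hit_prob where
  "hit_prob P Sbot s0 \<pi> s = (\<Sum>t. occ P Sbot s0 \<pi> t s)"

text \<open>E_pi[Q(S_T, A_T)] with A_T ~ \<pi>(.|S_T).\<close>
definition terminal_value where
  "terminal_value P Sbot s0 \<pi> Q =
     (\<Sum>s\<in>Sbot. hit_prob P Sbot s0 \<pi> s * (\<Sum>a\<in>UNIV. \<pi> s a * Q s a))"

definition reachable where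
  "reachable P Sbot s0 s \<longleftrightarrow> s = s0 \<or> (\<exists>\<pi> t. is_policy \<pi> \<and> occ P Sbot s0 \<pi> t s > 0)"

definition ELP :: "('s::finite \<Rightarrow> 'a::finite \<Rightarrow> 's \<Rightarrow> real) \<Rightarrow> ('s \<Rightarrow> real) \<Rightarrow> ('s \<Rightarrow> real)
    \<Rightarrow> 's set \<Rightarrow> 's \<Rightarrow> bool" where
  "ELP P R rho Sbot s0 \<longleftrightarrow>
     is_kernel P \<and> is_distr rho \<and> Sbot \<noteq> {} \<and> s0 \<in> Sbot \<and>
     (\<forall>\<pi>. is_policy \<pi> \<longrightarrow> finite_expected_T P Sbot s0 \<pi>) \<and>
     (\<forall>s\<in>Sbot. \<forall>a s'. P s a s' = rho s') \<and>
     (\<forall>s. reachable P Sbot s0 s)"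

definition bellman :: "('s::finite \<Rightarrow> 'a::finite \<Rightarrow> 's \<Rightarrow> real) \<Rightarrow> ('s \<Rightarrow> real) \<Rightarrow> 's set
    \<Rightarrow> ('s \<Rightarrow> 'a \<Rightarrow> real) \<Rightarrow> 's \<Rightarrow> 'a \<Rightarrow> real" where
  "bellman P R Sbot Q s a =
     (\<Sum>s'\<in>UNIV. P s a s' * (R s' + (if s' \<notin> Sbot then Max (range (Q s')) else 0)))"

definition lagrangian where
  "lagrangian P R Sbot s0 \<pi> Q lam =
     terminal_value P Sbot s0 \<pi> Q +
     (\<Sum>s\<in>UNIV. \<Sum>a\<in>UNIV. lam s a * (bellman P R Sbot Q s a - Q s a))"

end

theory Submission
  imports Defs
begin

text \<open>If \<open>Q \<le> B Q\<close> for the Bellman operator \<open>B\<close>, then \<open>D = Q - Q\<^sup>*\<close> is a subsolution of the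
  reward-free optimality equation: \<open>D(s,a)\<close> is at most the expectation over \<open>s' \<sim> P(\<cdot>|s,a)\<close> of
  \<open>max\<^sub>b D(s',b)\<close> on non-terminal \<open>s'\<close> (and \<open>0\<close> on terminal ones). If the maximum \<open>m\<close> of \<open>D\<close>
  were positive, the states where \<open>max\<^sub>b D = m\<close> would form a trap: the policy playing a
  maximising action there never leaves them and never terminates, contradicting finite expected
  episode length together with reachability. Hence \<open>Q \<le> Q\<^sup>*\<close> pointwise, so \<open>Q\<^sup>*\<close> maximises the
  terminal value among feasible \<open>Q\<close>. For the Lagrangian, \<open>L(Q\<^sup>*,\<lambda>)\<close> does not depend on \<open>\<lambda>\<close>,
  a feasible \<open>Q\<close> is bounded via \<open>\<lambda> = 0\<close>, and an infeasible one is pushed below any bound by a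
  large multiplier on one violated constraint.\<close>

lemma is_kernel_nonneg: "is_kernel P \<Longrightarrow> 0 \<le> P s a s'"
  by (simp add: is_kernel_def is_distr_def)

lemma is_kernel_sum: "is_kernel P \<Longrightarrow> (\<Sum>s'\<in>UNIV. P s a s') = 1"
  by (simp add: is_kernel_def is_distr_def)

lemma is_policy_nonneg: "is_policy \<pi> \<Longrightarrow> 0 \<le> \<pi> s a"
  by (simp add: is_policy_def is_distr_def)

lemma is_policy_sum: "is_policy \<pi> \<Longrightarrow> (\<Sum>a\<in>UNIV. \<pi> s a) = 1"
  by (simp add: is_policy_def is_distr_def)

lemma is_distr_ex_pos: "is_distr p \<Longrightarrow> \<exists>x. 0 < p x"
  unfolding is_distr_def by (metis not_less sum_nonpos zero_less_one)

lemma sum_pos_ex: "(0::real) < (\<Sum>x\<in>A. f x) \<Longrightarrow> \<exists>x\<in>A. 0 < f x"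
  by (metis not_less sum_nonpos)

lemma is_distr_support_attains_bound:
  fixes p f :: "'x::finite \<Rightarrow> real"
  assumes p: "is_distr p" and le: "\<And>x. f x \<le> m" and avg: "m \<le> (\<Sum>x\<in>UNIV. p x * f x)"
    and pos: "0 < p y"
  shows "f y = m"
proof -
  have nn: "\<forall>x\<in>UNIV. 0 \<le> p x * (m - f x)"
    using p le unfolding is_distr_def by simp
  have "(\<Sum>x\<in>UNIV. p x * (m - f x)) = m - (\<Sum>x\<in>UNIV. p x * f x)"
    using p unfolding is_distr_def
    by (simp add: right_diff_distrib sum_subtractf sum_distrib_right[symmetric])
  with avg nn have "(\<Sum>x\<in>UNIV. p x * (m - f x)) = 0"
    using sum_nonneg[of UNIV "\<lambda>x. p x * (m - f x)"] by simp
  then have "p y * (m - f y) = 0" using nn by (simp add: sum_nonneg_eq_0_iff)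
  then show ?thesis using pos by simp
qed

lemma occ_nonneg:
  assumes "is_kernel P" "is_policy \<pi>"
  shows "0 \<le> occ P Sbot s0 \<pi> t s"
  by (induction t arbitrary: s)
     (auto intro!: sum_nonneg mult_nonneg_nonneg is_kernel_nonneg[OF assms(1)]
        is_policy_nonneg[OF assms(2)])

lemma occ_0_terminal_start:
  assumes "is_policy \<pi>" "s0 \<in> Sbot" "\<forall>s\<in>Sbot. \<forall>a s'. P s a s' = rho s'"
  shows "occ P Sbot s0 \<pi> 0 s = rho s"
  using assms by (simp add: is_policy_sum sum_distrib_right[symmetric])

lemma hit_prob_nonneg:
  assumes kP: "is_kernel P" and pol: "is_policy \<pi>" and fin: "finite_expected_T P Sbot s0 \<pi>"
  shows "0 \<le> hit_prob P Sbot s0 \<pi> s"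
proof -
  have "summable (\<lambda>t. occ P Sbot s0 \<pi> t s)"
  proof (rule summable_comparison_test'[OF fin[unfolded finite_expected_T_def]])
    fix t
    show "norm (occ P Sbot s0 \<pi> t s) \<le> (\<Sum>s\<in>UNIV. occ P Sbot s0 \<pi> t s)"
      using occ_nonneg[OF kP pol] by (simp add: member_le_sum)
  qed
  then show ?thesis
    unfolding hit_prob_def by (rule suminf_nonneg) (rule occ_nonneg[OF kP pol])
qed

lemma terminal_value_mono:
  assumes "is_kernel P" "is_policy \<pi>" "finite_expected_T P Sbot s0 \<pi>"
    and "\<And>s a. Q s a \<le> Q' s a"
  shows "terminal_value P Sbot s0 \<pi> Q \<le> terminal_value P Sbot s0 \<pi> Q'"
  unfolding terminal_value_def
  using assms hit_prob_nonneg[OF assms(1-3)] is_policy_nonneg[OF assms(2)]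
  by (intro sum_mono mult_left_mono) auto

text \<open>A policy that is positive off \<open>K\<close> follows every path of any other policy until that
  path first enters \<open>K\<close>.\<close>
lemma occ_pos_transfer:
  fixes P :: "'s::finite \<Rightarrow> 'a::finite \<Rightarrow> 's \<Rightarrow> real"
  assumes kP: "is_kernel P" and pol: "is_policy \<pi>" and pol': "is_policy \<pi>'"
    and s0K: "s0 \<notin> K" and pos': "\<And>s a. s \<notin> K \<Longrightarrow> 0 < \<pi>' s a"
    and occ_pos: "0 < occ P Sbot s0 \<pi> t s"
  shows "(\<exists>t' s'. s' \<in> K \<and> 0 < occ P Sbot s0 \<pi>' t' s') \<or> 0 < occ P Sbot s0 \<pi>' t s"
  using occ_pos
proof (induction t arbitrary: s)
  case 0
  then obtain a where "0 < \<pi> s0 a * P s0 a s"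
    using sum_pos_ex by fastforce
  with is_policy_nonneg[OF pol, of s0 a] pos'[OF s0K, of a]
  have "0 < \<pi>' s0 a * P s0 a s" by (simp add: zero_less_mult_iff)
  also have "\<dots> \<le> (\<Sum>a\<in>UNIV. \<pi>' s0 a * P s0 a s)"
    by (rule member_le_sum)
       (auto intro: mult_nonneg_nonneg is_policy_nonneg[OF pol'] is_kernel_nonneg[OF kP])
  finally show ?case by simp
next
  case (Suc t)
  then obtain s1 where s1: "s1 \<notin> Sbot"
    and "0 < (\<Sum>a\<in>UNIV. occ P Sbot s0 \<pi> t s1 * \<pi> s1 a * P s1 a s)"
    using sum_pos_ex by fastforce
  then obtain a where "0 < occ P Sbot s0 \<pi> t s1 * \<pi> s1 a * P s1 a s"
    using sum_pos_ex by blast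
  then have occ1: "0 < occ P Sbot s0 \<pi> t s1" and P1: "0 < P s1 a s"
    using is_policy_nonneg[OF pol, of s1 a] occ_nonneg[OF kP pol, of Sbot s0 t s1] is_kernel_nonneg[OF kP, of s1 a s]
    by (auto simp: zero_less_mult_iff)
  have nn: "0 \<le> occ P Sbot s0 \<pi>' t x * \<pi>' x b * P x b s" for x b
    by (intro mult_nonneg_nonneg occ_nonneg[OF kP pol'] is_policy_nonneg[OF pol']
        is_kernel_nonneg[OF kP])
  from Suc.IH[OF occ1] show ?case
  proof (elim disjE)
    assume occ1': "0 < occ P Sbot s0 \<pi>' t s1"
    show ?case
    proof (cases "s1 \<in> K")
      case False
      with occ1' P1 pos' have "0 < occ P Sbot s0 \<pi>' t s1 * \<pi>' s1 a * P s1 a s" by simp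
      also have "\<dots> \<le> (\<Sum>b\<in>UNIV. occ P Sbot s0 \<pi>' t s1 * \<pi>' s1 b * P s1 b s)"
        by (rule member_le_sum) (simp_all add: nn)
      also have "\<dots> \<le> occ P Sbot s0 \<pi>' (Suc t) s"
        unfolding occ.simps
        by (rule member_le_sum[of s1 "-Sbot"]) (simp_all add: s1 sum_nonneg nn)
      finally show ?thesis by simp
    qed (use occ1' in blast)
  qed blast
qed

lemma occ_closed_set_mono:
  assumes kP: "is_kernel P" and pol: "is_policy \<pi>" and C: "C \<subseteq> -Sbot"
    and closed: "\<And>x a y. x \<in> C \<Longrightarrow> 0 < \<pi> x a \<Longrightarrow> 0 < P x a y \<Longrightarrow> y \<in> C"
  shows "(\<Sum>y\<in>C. occ P Sbot s0 \<pi> t y) \<le> (\<Sum>y\<in>C. occ P Sbot s0 \<pi> (Suc t) y)"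
proof -
  let ?o = "occ P Sbot s0 \<pi> t"
  have stay: "\<pi> x a * (\<Sum>y\<in>C. P x a y) = \<pi> x a" if "x \<in> C" for x a
  proof (cases "\<pi> x a = 0")
    case False
    then have "0 < \<pi> x a" using is_policy_nonneg[OF pol, of x a] by simp
    then have "(\<Sum>y\<in>C. P x a y) = (\<Sum>y\<in>UNIV. P x a y)"
      using closed[OF that] is_kernel_nonneg[OF kP, of x a]
      by (intro sum.mono_neutral_left) (auto simp: not_less order.order_iff_strict)
    then show ?thesis using is_kernel_sum[OF kP] by simp
  qed simp
  have "(\<Sum>y\<in>C. ?o y) = (\<Sum>x\<in>C. ?o x * (\<Sum>a\<in>UNIV. \<pi> x a * (\<Sum>y\<in>C. P x a y)))"
    by (intro sum.cong refl) (simp add: stay is_policy_sum[OF pol])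
  also have "\<dots> = (\<Sum>x\<in>C. \<Sum>a\<in>UNIV. \<Sum>y\<in>C. ?o x * \<pi> x a * P x a y)"
    by (simp add: sum_distrib_left mult.assoc)
  also have "\<dots> = (\<Sum>y\<in>C. \<Sum>x\<in>C. \<Sum>a\<in>UNIV. ?o x * \<pi> x a * P x a y)"
    by (rule trans[OF sum.cong[OF refl sum.swap] sum.swap])
  also have "\<dots> \<le> (\<Sum>y\<in>C. \<Sum>x\<in>-Sbot. \<Sum>a\<in>UNIV. ?o x * \<pi> x a * P x a y)"
    using C by (intro sum_mono sum_mono2)
      (auto intro!: sum_nonneg mult_nonneg_nonneg occ_nonneg[OF kP pol]
         is_policy_nonneg[OF pol] is_kernel_nonneg[OF kP])
  also have "\<dots> = (\<Sum>y\<in>C. occ P Sbot s0 \<pi> (Suc t) y)" by simp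
  finally show ?thesis .
qed

text \<open>Since the episode ends almost surely, the occupation mass tends to zero; being
  nondecreasing on a closed set, it must vanish there.\<close>
lemma occ_closed_set_zero:
  assumes kP: "is_kernel P" and pol: "is_policy \<pi>" and fin: "finite_expected_T P Sbot s0 \<pi>"
    and C: "C \<subseteq> -Sbot"
    and closed: "\<And>x a y. x \<in> C \<Longrightarrow> 0 < \<pi> x a \<Longrightarrow> 0 < P x a y \<Longrightarrow> y \<in> C"
    and y: "y \<in> C"
  shows "occ P Sbot s0 \<pi> t y = 0"
proof -
  define g where "g t = (\<Sum>y\<in>C. occ P Sbot s0 \<pi> t y)" for t
  have "incseq g"
    unfolding g_def by (rule incseq_SucI) (rule occ_closed_set_mono[OF kP pol C closed])
  moreover have "summable g"
  proof (rule summable_comparison_test'[OF fin[unfolded finite_expected_T_def]])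
    fix t
    show "norm (g t) \<le> (\<Sum>s\<in>UNIV. occ P Sbot s0 \<pi> t s)"
      unfolding g_def using occ_nonneg[OF kP pol]
      by (simp add: sum_nonneg sum_mono2)
  qed
  ultimately have "g t \<le> 0" by (intro incseq_le summable_LIMSEQ_zero)
  then show ?thesis
    using y occ_nonneg[OF kP pol] unfolding g_def
    by (metis antisym finite sum_nonneg sum_nonneg_eq_0_iff)
qed

text \<open>Termination forbids a trap from ever being visited, while reachability (or, if the trap
  contains a terminal state, the restart distribution \<open>rho\<close>) forces a visit.\<close>
lemma ELP_no_trap:
  fixes P :: "'s::finite \<Rightarrow> 'a::finite \<Rightarrow> 's \<Rightarrow> real"
  assumes elp: "ELP P R rho Sbot s0" and pol': "is_policy \<pi>'"
    and pos': "\<And>s a. s \<notin> K \<Longrightarrow> 0 < \<pi>' s a" and K: "sK \<in> K"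
    and trap: "\<And>x a y. x \<in> K \<Longrightarrow> 0 < \<pi>' x a \<Longrightarrow> 0 < P x a y \<Longrightarrow> y \<in> K - Sbot"
  shows False
proof -
  have kP: "is_kernel P" and rho: "is_distr rho" and s0: "s0 \<in> Sbot"
    and fin: "finite_expected_T P Sbot s0 \<pi>'"
    and restart: "\<forall>s\<in>Sbot. \<forall>a s'. P s a s' = rho s'"
    and reach: "reachable P Sbot s0 sK"
    using elp pol' unfolding ELP_def by auto
  have unvisited: "occ P Sbot s0 \<pi>' t y = 0" if "y \<in> K - Sbot" for t y
    using occ_closed_set_zero[OF kP pol' fin, of "K - Sbot"] trap that by blast
  show False
  proof (cases "K \<inter> Sbot = {}")
    case True
    with K s0 have s0K: "s0 \<notin> K" by blast
    with K obtain \<pi> t where pol: "is_policy \<pi>" and visit: "0 < occ P Sbot s0 \<pi> t sK"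
      using reach unfolding reachable_def by auto
    from occ_pos_transfer[OF kP pol pol' s0K pos' visit] True K unvisited show False
      by (metis Diff_iff disjoint_iff less_irrefl)
  next
    case False
    then obtain s where s: "s \<in> K" "s \<in> Sbot" by blast
    obtain y where y: "0 < rho y" using is_distr_ex_pos[OF rho] by blast
    obtain a where "0 < \<pi>' s a"
      using is_distr_ex_pos pol' unfolding is_policy_def by blast
    with y s restart have "y \<in> K - Sbot" by (intro trap[of s a]) auto
    moreover have "occ P Sbot s0 \<pi>' 0 y = rho y"
      by (rule occ_0_terminal_start[OF pol' s0 restart])
    ultimately show False using unvisited y by (metis less_irrefl)
  qed
qed

lemma Max_range_diff_le:
  fixes f g :: "'a::finite \<Rightarrow> real"
  shows "Max (range f) - Max (range g) \<le> Max (range (\<lambda>b. f b - g b))"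
proof -
  have "Max (range f) \<in> range f" by (rule Max_in) auto
  then obtain b where "Max (range f) = f b" by blast
  moreover have "g b \<le> Max (range g)" "f b - g b \<le> Max (range (\<lambda>b. f b - g b))"
    by (auto intro: Max_ge)
  ultimately show ?thesis by linarith
qed

lemma bellman_diff_le:
  assumes "is_kernel P"
  shows "bellman P R Sbot Q s a - bellman P R Sbot Q' s a
    \<le> (\<Sum>s'\<in>UNIV. P s a s' * (if s' \<notin> Sbot then Max (range (\<lambda>b. Q s' b - Q' s' b)) else 0))"
  unfolding bellman_def sum_subtractf[symmetric]
proof (rule sum_mono)
  fix s'
  have "(if s' \<notin> Sbot then Max (range (Q s')) else 0) - (if s' \<notin> Sbot then Max (range (Q' s')) else 0)
      \<le> (if s' \<notin> Sbot then Max (range (\<lambda>b. Q s' b - Q' s' b)) else 0)"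
    using Max_range_diff_le[of "Q s'" "Q' s'"] by simp
  from mult_left_mono[OF this is_kernel_nonneg[OF assms]]
  show "P s a s' * (R s' + (if s' \<notin> Sbot then Max (range (Q s')) else 0))
      - P s a s' * (R s' + (if s' \<notin> Sbot then Max (range (Q' s')) else 0))
      \<le> P s a s' * (if s' \<notin> Sbot then Max (range (\<lambda>b. Q s' b - Q' s' b)) else 0)"
    by (simp add: algebra_simps)
qed

lemma homogeneous_subsolution_nonpos:
  fixes P :: "'s::finite \<Rightarrow> 'a::finite \<Rightarrow> 's \<Rightarrow> real" and D :: "'s \<Rightarrow> 'a \<Rightarrow> real"
  assumes elp: "ELP P R rho Sbot s0"
    and sub: "\<And>x b. D x b \<le> (\<Sum>s'\<in>UNIV. P x b s' * (if s' \<notin> Sbot then Max (range (D s')) else 0))"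
  shows "D s a \<le> 0"
proof -
  have kP: "is_kernel P" using elp unfolding ELP_def by simp
  define M where "M s = Max (range (D s))" for s
  define m where "m = Max (range M)"
  have DM: "D s a \<le> M s" for s a unfolding M_def by (rule Max_ge) auto
  have Mm: "M s \<le> m" for s unfolding m_def by (rule Max_ge) auto
  have "m \<le> 0"
  proof (rule ccontr)
    assume "\<not> m \<le> 0"
    then have m: "0 < m" by simp
    define K where "K = {s. M s = m}"
    have "m \<in> range M" unfolding m_def by (rule Max_in) auto
    then obtain sK where sK: "sK \<in> K" unfolding K_def by auto
    define act where "act s = (SOME a. D s a = M s)" for s
    have act: "D s (act s) = M s" for s
    proof -
      have "M s \<in> range (D s)" unfolding M_def by (rule Max_in) auto
      then show ?thesis unfolding act_def by (auto intro: someI)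
    qed
    have trap: "y \<in> K - Sbot" if "s \<in> K" "0 < P s (act s) y" for s y
    proof -
      let ?f = "\<lambda>y. if y \<notin> Sbot then M y else 0"
      have "?f y = m"
      proof (rule is_distr_support_attains_bound[of "P s (act s)"])
        show "is_distr (P s (act s))" using kP unfolding is_kernel_def by simp
        show "?f x \<le> m" for x using Mm[of x] m by simp
        show "m \<le> (\<Sum>x\<in>UNIV. P s (act s) x * ?f x)"
          using sub[of s "act s", folded M_def] act[of s] that(1) unfolding K_def by simp
      qed fact
      then show ?thesis using m unfolding K_def by (auto split: if_splits)
    qed
    define \<pi>' where
      "\<pi>' s a = (if s \<in> K then (if a = act s then 1 else 0) else 1 / real CARD('a))" for s a
    have "is_policy \<pi>'"
      unfolding is_policy_def is_distr_def \<pi>'_def by (auto simp: sum.If_cases)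
    then show False
    proof (rule ELP_no_trap[OF elp _ _ sK])
      show "0 < \<pi>' s a" if "s \<notin> K" for s a using that unfolding \<pi>'_def by simp
      show "y \<in> K - Sbot" if "x \<in> K" "0 < \<pi>' x a" "0 < P x a y" for x a y
        using that trap unfolding \<pi>'_def by (auto split: if_splits)
    qed
  qed
  then show ?thesis using DM[of s a] Mm[of s] by simp
qed

lemma bellman_subsolution_le_fixpoint:
  fixes P :: "'s::finite \<Rightarrow> 'a::finite \<Rightarrow> 's \<Rightarrow> real"
  assumes elp: "ELP P R rho Sbot s0" and hfix: "bellman P R Sbot Qstar = Qstar"
    and sub: "\<And>s a. Q s a \<le> bellman P R Sbot Q s a"
  shows "Q s a \<le> Qstar s a"
proof -
  have kP: "is_kernel P" using elp unfolding ELP_def by simp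
  have "Q s a - Qstar s a \<le> bellman P R Sbot Q s a - bellman P R Sbot Qstar s a" for s a
    using sub[of s a] hfix by (metis diff_right_mono)
  then have "Q s a - Qstar s a \<le> 0"
    using order_trans[OF _ bellman_diff_le[OF kP]]
    by (intro homogeneous_subsolution_nonpos[OF elp]) blast
  then show ?thesis by simp
qed

lemma lagrangian_fixpoint:
  "bellman P R Sbot Q = Q \<Longrightarrow> lagrangian P R Sbot s0 \<pi> Q lam = terminal_value P Sbot s0 \<pi> Q"
  unfolding lagrangian_def by simp

lemma lagrangian_single_multiplier:
  fixes Q :: "'s::finite \<Rightarrow> 'a::finite \<Rightarrow> real"
  shows "lagrangian P R Sbot s0 \<pi> Q (\<lambda>s a. if s = s1 \<and> a = a1 then c else 0)
    = terminal_value P Sbot s0 \<pi> Q + c * (bellman P R Sbot Q s1 a1 - Q s1 a1)"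
proof -
  have "(if s = s1 \<and> a = a1 then c else 0) * (bellman P R Sbot Q s a - Q s a)
      = (if a = a1 then if s = s1 then c * (bellman P R Sbot Q s a - Q s a) else 0 else 0)" for s a
    by simp
  then show ?thesis unfolding lagrangian_def by (simp add: sum.delta')
qed

text \<open>Weak duality: penalising a single violated constraint drives the Lagrangian of an
  infeasible \<open>Q\<close> below any bound.\<close>
lemma INF_lagrangian_le:
  fixes Q :: "'s::finite \<Rightarrow> 'a::finite \<Rightarrow> real"
  assumes feasible: "\<forall>s a. Q s a \<le> bellman P R Sbot Q s a \<Longrightarrow> terminal_value P Sbot s0 \<pi> Q \<le> v"
  shows "(INF lam\<in>{lam. \<forall>s a. 0 \<le> lam s a}. ereal (lagrangian P R Sbot s0 \<pi> Q lam)) \<le> ereal v"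
proof -
  have "\<exists>lam. (\<forall>s a. 0 \<le> lam s a) \<and> lagrangian P R Sbot s0 \<pi> Q lam \<le> v"
  proof (cases "\<forall>s a. Q s a \<le> bellman P R Sbot Q s a")
    case True
    then show ?thesis
      using feasible lagrangian_single_multiplier[of P R Sbot s0 \<pi> Q _ _ 0] by auto
  next
    case False
    then obtain s1 a1 where "bellman P R Sbot Q s1 a1 < Q s1 a1" by (auto simp: not_le)
    then have gap: "0 < Q s1 a1 - bellman P R Sbot Q s1 a1" by simp
    define c where "c = max 0 ((terminal_value P Sbot s0 \<pi> Q - v) / (Q s1 a1 - bellman P R Sbot Q s1 a1))"
    have "terminal_value P Sbot s0 \<pi> Q - v \<le> c * (Q s1 a1 - bellman P R Sbot Q s1 a1)"
      using gap unfolding c_def by (simp add: pos_divide_le_eq max_mult_distrib_right)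
    then show ?thesis
      using lagrangian_single_multiplier[of P R Sbot s0 \<pi> Q s1 a1 c]
      by (intro exI[of _ "\<lambda>s a. if s = s1 \<and> a = a1 then c else 0"]) (auto simp: c_def algebra_simps)
  qed
  then obtain lam where "\<forall>s a. 0 \<le> lam s a" "lagrangian P R Sbot s0 \<pi> Q lam \<le> v" by blast
  then show ?thesis by (intro INF_lower2[of lam]) auto
qed

theorem mainTheorem9:
  fixes P :: "'s::finite \<Rightarrow> 'a::finite \<Rightarrow> 's \<Rightarrow> real"
    and R rho :: "'s \<Rightarrow> real" and Sbot :: "'s set" and s0 :: 's
    and \<pi> Qstar :: "'s \<Rightarrow> 'a \<Rightarrow> real"
  assumes elp: "ELP P R rho Sbot s0"
    and hpol: "is_policy \<pi>"
    and hfix: "bellman P R Sbot Qstar = Qstar"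
  shows "(\<forall>s a. Qstar s a \<le> bellman P R Sbot Qstar s a)
       \<and> (\<forall>Q. (\<forall>s a. Q s a \<le> bellman P R Sbot Q s a) \<longrightarrow>
              terminal_value P Sbot s0 \<pi> Q \<le> terminal_value P Sbot s0 \<pi> Qstar)
       \<and> (\<forall>Q. (INF lam\<in>{lam. \<forall>s a. 0 \<le> lam s a}. ereal (lagrangian P R Sbot s0 \<pi> Q lam))
              \<le> (INF lam\<in>{lam. \<forall>s a. 0 \<le> lam s a}. ereal (lagrangian P R Sbot s0 \<pi> Qstar lam)))"
proof -
  have kP: "is_kernel P" and fin: "finite_expected_T P Sbot s0 \<pi>"
    using elp hpol unfolding ELP_def by auto
  have primal: "terminal_value P Sbot s0 \<pi> Q \<le> terminal_value P Sbot s0 \<pi> Qstar"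
    if "\<forall>s a. Q s a \<le> bellman P R Sbot Q s a" for Q
    using terminal_value_mono[OF kP hpol fin] bellman_subsolution_le_fixpoint[OF elp hfix] that
    by blast
  have "(INF lam\<in>{lam. \<forall>s a. 0 \<le> lam s a}. ereal (lagrangian P R Sbot s0 \<pi> Qstar lam))
      = ereal (terminal_value P Sbot s0 \<pi> Qstar)"
    by (subst lagrangian_fixpoint[OF hfix], subst INF_constant) auto
  then show ?thesis using hfix primal INF_lagrangian_le[OF primal] by auto
qed

end
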